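(* For every $n\geq 1$, $$P_n(a_1,\dots,a_n;x_1,\dots,x_n) = \frac{1}{\prod_{i=1}^n x_i}\sum_{\sigma\in S_n}\frac{\exp\big(\sum_{i<j} w_{\sigma(i)\sigma(j)}\big)}{\prod_{j=1}^{n-1} u_{\sigma(j)\sigma(j+1)}},$$ where $w_{jk}:=(a_jx_k-a_kx_j)/2$ and $u_{jk}:=a_j/x_j-a_k/x_k$ (an identity of meromorphic functions of $a_1,\dots,a_n,x_1,\dots,x_n$).
   Context: Let $\zeta(x) := e^{x/2}-e^{-x/2}$. Define $P_1(a_1;x_1):=1/x_1$ and, for $n\geq 2$, $$P_n(a_1,\dots,a_n;x_1,\dots,x_n) := \sum_{\substack{\tau\in S_n\\ \tau(1)=1}} \frac{\prod_{j=2}^{n-1} x_{\tau(j)} \prod_{j=1}^{n-1}\zeta\Big(\big(\sum_{k=1}^{j} a_{\tau(k)}\big)x_{\tau(j+1)} - a_{\tau(j+1)}\big(\sum_{k=1}^{j} x_{\tau(k)}\big)\Big)}{\prod_{j=1}^{n-1}\big(a_{\tau(j)}x_{\tau(j+1)} - a_{\tau(j+1)}x_{\tau(j)}\big)}.$$ *)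

theory Defs
  imports Complex_Main "HOL-Combinatorics.Permutations"
begin

definition zeta :: "complex \<Rightarrow> complex" where
  "zeta z = exp (z / 2) - exp (- z / 2)"

definition P :: "nat \<Rightarrow> (nat \<Rightarrow> complex) \<Rightarrow> (nat \<Rightarrow> complex) \<Rightarrow> complex" where
  "P n a x =
    (if n = 1 then 1 / x 1
     else \<Sum>\<tau>\<in>{\<tau>. \<tau> permutes {1..n} \<and> \<tau> 1 = 1}.
        ((\<Prod>j=2..n-1. x (\<tau> j)) *
         (\<Prod>j=1..n-1. zeta ((\<Sum>k=1..j. a (\<tau> k)) * x (\<tau> (j+1))
                              - a (\<tau> (j+1)) * (\<Sum>k=1..j. x (\<tau> k)))))
        / (\<Prod>j=1..n-1. a (\<tau> j) * x (\<tau> (j+1)) - a (\<tau> (j+1)) * x (\<tau> j)))"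

definition w :: "(nat \<Rightarrow> complex) \<Rightarrow> (nat \<Rightarrow> complex) \<Rightarrow> nat \<Rightarrow> nat \<Rightarrow> complex" where
  "w a x j k = (a j * x k - a k * x j) / 2"

definition u :: "(nat \<Rightarrow> complex) \<Rightarrow> (nat \<Rightarrow> complex) \<Rightarrow> nat \<Rightarrow> nat \<Rightarrow> complex" where
  "u a x j k = a j / x j - a k / x k"

end

theory Submission
  imports Defs "HOL-Combinatorics.Multiset_Permutations"
begin

(* Put beta i = a i / x i, so that u j k = beta j - beta k.  For tau fixing 1, the summand of P n
   equals (prod x)^-1 * Z(tau) / prod_j u (tau j) (tau (j+1)), where the j-th factor of Z(tau) is
   zeta (2 W_j) = exp W_j - exp (-W_j) and W_j is the sum of w over the pairs (k, tau (j+1)), k <= j.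
   Expanding Z(tau) amounts to placing tau 2, tau 3, ... one by one at the right end (sign +) or
   at the left end (sign -) of a row that starts with 1; each choice yields a permutation s of
   {1..n} with weight exp (sum over i < j of w (s i) (s j)).  Conversely, if s = rev L @ 1 # R,
   the tau producing s are exactly the shuffles of L and R, all with sign (-1)^|L|.  Summed over
   these shuffles, the chain weights 1 / prod (beta t_j - beta t_(j+1)) of 1 # t factor, by the
   partial fraction identity for three points, into the chain weight of 1 # L times that of
   1 # R, which is (-1)^|L| times the chain weight of s. *)

section \<open>Chain weights and shuffles\<close>

fun chain_weight :: "('a \<Rightarrow> 'b::field) \<Rightarrow> 'a list \<Rightarrow> 'b" where
  "chain_weight \<beta> (p # q # ys) = chain_weight \<beta> (q # ys) / (\<beta> p - \<beta> q)"
| "chain_weight \<beta> _ = 1"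

lemma chain_weight_append:
  "chain_weight \<beta> (xs @ p # ys) = chain_weight \<beta> (xs @ [p]) * chain_weight \<beta> (p # ys)"
  by (induction xs rule: induct_list012) (auto simp: neq_Nil_conv)

lemma chain_weight_rev:
  "chain_weight \<beta> (rev xs) = (-1) ^ (length xs - 1) * chain_weight \<beta> xs"
proof (induction xs rule: induct_list012)
  case (3 p q ys)
  have "chain_weight \<beta> (rev (p # q # ys)) = chain_weight \<beta> (rev (q # ys)) / (\<beta> q - \<beta> p)"
    using chain_weight_append[of \<beta> "rev ys" q "[p]"] by simp
  with "3.IH"(2) show ?case
    by (simp add: minus_diff_eq[symmetric, of "\<beta> p"] del: minus_diff_eq)
qed simp_all

lemma chain_weight_rev_append:
  "chain_weight \<beta> (rev L @ c # R) = (-1) ^ length L * chain_weight \<beta> (c # L) * chain_weight \<beta> (c # R)"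
  using chain_weight_append[of \<beta> "rev L" c R] chain_weight_rev[of \<beta> "c # L"] by simp

lemma partial_fraction_three_points:
  fixes C X Y :: "'a::field"
  assumes "C \<noteq> X" "C \<noteq> Y" "X \<noteq> Y"
  shows "1 / ((C - X) * (X - Y)) + 1 / ((C - Y) * (Y - X)) = 1 / ((C - X) * (C - Y))"
proof -
  have "C - X \<noteq> 0" "C - Y \<noteq> 0" "X - Y \<noteq> 0" "Y - X \<noteq> 0"
    using assms by simp_all
  then show ?thesis
    by (simp add: divide_simps) (simp add: algebra_simps)
qed

lemma sum_shuffles_chain_weight:
  assumes "distinct (c # L @ R)" "inj_on \<beta> (set (c # L @ R))"
  shows "(\<Sum>t\<in>shuffles L R. chain_weight \<beta> (c # t)) = chain_weight \<beta> (c # L) * chain_weight \<beta> (c # R)"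
  using assms
proof (induction L R arbitrary: c rule: shuffles.induct)
  case (3 p L q R)
  have IH_left: "(\<Sum>t\<in>shuffles L (q # R). chain_weight \<beta> (p # t)) = chain_weight \<beta> (p # L) * chain_weight \<beta> (p # q # R)"
    by (rule "3.IH"(1)) (use "3.prems" in \<open>auto intro: inj_on_subset\<close>)
  have IH_right: "(\<Sum>t\<in>shuffles (p # L) R. chain_weight \<beta> (q # t)) = chain_weight \<beta> (q # p # L) * chain_weight \<beta> (q # R)"
    by (rule "3.IH"(2)) (use "3.prems" in \<open>auto intro: inj_on_subset\<close>)
  have distinct_values: "\<beta> c \<noteq> \<beta> p" "\<beta> c \<noteq> \<beta> q" "\<beta> p \<noteq> \<beta> q"
    using "3.prems" by (auto dest: inj_onD)
  have "p \<noteq> q"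
    using "3.prems" by auto
  then have disjoint: "(#) p ` shuffles L (q # R) \<inter> (#) q ` shuffles (p # L) R = {}"
    by auto
  have "(\<Sum>t\<in>shuffles (p # L) (q # R). chain_weight \<beta> (c # t))
      = (\<Sum>t\<in>shuffles L (q # R). chain_weight \<beta> (c # p # t)) + (\<Sum>t\<in>shuffles (p # L) R. chain_weight \<beta> (c # q # t))"
    by (simp add: sum.union_disjoint disjoint sum.reindex)
  also have "\<dots> = chain_weight \<beta> (p # L) * chain_weight \<beta> (p # q # R) / (\<beta> c - \<beta> p)
      + chain_weight \<beta> (q # p # L) * chain_weight \<beta> (q # R) / (\<beta> c - \<beta> q)"
    by (simp only: chain_weight.simps(1) sum_divide_distrib[symmetric] IH_left IH_right)
  also have "\<dots> = chain_weight \<beta> (p # L) * chain_weight \<beta> (q # R)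
      * (1 / ((\<beta> c - \<beta> p) * (\<beta> p - \<beta> q)) + 1 / ((\<beta> c - \<beta> q) * (\<beta> q - \<beta> p)))"
    by (simp add: field_simps)
  also have "\<dots> = chain_weight \<beta> (c # p # L) * chain_weight \<beta> (c # q # R)"
    using distinct_values by (simp add: partial_fraction_three_points)
  finally show ?case .
qed simp_all

section \<open>Expanding the zeta factors\<close>

fun sum_pairs :: "('a \<Rightarrow> 'a \<Rightarrow> 'b::comm_monoid_add) \<Rightarrow> 'a list \<Rightarrow> 'b" where
  "sum_pairs \<omega> [] = 0"
| "sum_pairs \<omega> (y # ys) = sum_list (map (\<omega> y) ys) + sum_pairs \<omega> ys"

lemma sum_pairs_snoc:
  "sum_pairs \<omega> (xs @ [y]) = sum_pairs \<omega> xs + sum_list (map (\<lambda>k. \<omega> k y) xs)"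
  by (induction xs) (simp_all add: algebra_simps)

definition zeta_prefix :: "('a \<Rightarrow> 'a \<Rightarrow> complex) \<Rightarrow> 'a \<Rightarrow> 'a list \<Rightarrow> complex" where
  "zeta_prefix \<omega> c t = (\<Prod>j<length t. zeta (2 * sum_list (map (\<lambda>k. \<omega> k (t ! j)) (c # take j t))))"

lemma zeta_prefix_Nil [simp]: "zeta_prefix \<omega> c [] = 1"
  by (simp add: zeta_prefix_def)

lemma zeta_prefix_snoc:
  "zeta_prefix \<omega> c (t @ [y]) = zeta_prefix \<omega> c t * zeta (2 * sum_list (map (\<lambda>k. \<omega> k y) (c # t)))"
  unfolding zeta_prefix_def by (simp add: nth_append)

(* The row built from c by appending the elements of t in order, those in R at the right end and
   the others at the left end. *)
definition arrange :: "'a \<Rightarrow> 'a set \<Rightarrow> 'a list \<Rightarrow> 'a list" where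
  "arrange c R t = rev (filter (\<lambda>z. z \<notin> R) t) @ c # filter (\<lambda>z. z \<in> R) t"

lemma mset_arrange: "mset (arrange c R t) = mset (c # t)"
  by (simp add: arrange_def)

lemma arrange_snoc_in:
  assumes "y \<notin> set t"
  shows "arrange c (insert y R) (t @ [y]) = arrange c R t @ [y]"
proof -
  have "filter (\<lambda>z. z \<noteq> y \<and> z \<notin> R) t = filter (\<lambda>z. z \<notin> R) t"
       "filter (\<lambda>z. z = y \<or> z \<in> R) t = filter (\<lambda>z. z \<in> R) t"
    using assms by (auto intro!: filter_cong)
  then show ?thesis
    by (simp add: arrange_def)
qed

lemma arrange_snoc_notin:
  "y \<notin> R \<Longrightarrow> arrange c R (t @ [y]) = y # arrange c R t"
  by (simp add: arrange_def)

lemma sum_list_map_arrange: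
  fixes f :: "'a \<Rightarrow> 'b::comm_monoid_add"
  shows "sum_list (map f (arrange c R t)) = sum_list (map f (c # t))"
  by (simp only: sum_mset_sum_list[symmetric] mset_map mset_arrange)

lemma sum_Pow_insert:
  assumes "finite A" "a \<notin> A"
  shows "(\<Sum>X\<in>Pow (insert a A). f X) = (\<Sum>X\<in>Pow A. f X) + (\<Sum>X\<in>Pow A. f (insert a X))"
proof -
  have "inj_on (insert a) (Pow A)"
    using assms(2) by (auto simp: inj_on_def)
  then show ?thesis
    unfolding Pow_insert using assms by (subst sum.union_disjoint) (auto simp: sum.reindex)
qed

lemma zeta_prefix_expansion:
  assumes antisym: "\<And>p q. \<omega> q p = - \<omega> p q" and "distinct t"
  shows "zeta_prefix \<omega> c t =
    (\<Sum>R\<in>Pow (set t). (-1) ^ length (filter (\<lambda>z. z \<notin> R) t) * exp (sum_pairs \<omega> (arrange c R t)))"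
  using \<open>distinct t\<close>
proof (induction t rule: rev_induct)
  case Nil
  then show ?case by (simp add: arrange_def)
next
  case (snoc y t)
  define W where "W = sum_list (map (\<lambda>k. \<omega> k y) (c # t))"
  define F where "F xs R = (-1) ^ length (filter (\<lambda>z. z \<notin> R) xs) * exp (sum_pairs \<omega> (arrange c R xs))" for xs R
  have y: "y \<notin> set t" "distinct t"
    using snoc.prems by simp_all
  have pairs_right: "sum_list (map (\<lambda>k. \<omega> k y) (arrange c R t)) = W" for R
    unfolding W_def by (rule sum_list_map_arrange)
  have "\<omega> y = uminus \<circ> (\<lambda>k. \<omega> k y)"
    by (rule ext) (subst antisym, simp)
  then have pairs_left: "sum_list (map (\<omega> y) (arrange c R t)) = - W" for R
    by (simp only: uminus_sum_list_map[symmetric] pairs_right)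
  have y_left: "F (t @ [y]) R = - (F t R * exp (- W))" if "R \<subseteq> set t" for R
  proof -
    have "y \<notin> R"
      using y that by auto
    then show ?thesis
      by (simp add: F_def arrange_snoc_notin pairs_left exp_add[symmetric])
  qed
  have y_right: "F (t @ [y]) (insert y R) = F t R * exp W" for R
  proof -
    have "filter (\<lambda>z. z \<notin> insert y R) t = filter (\<lambda>z. z \<notin> R) t"
      using y by (auto intro: filter_cong)
    then show ?thesis
      using y by (simp add: F_def arrange_snoc_in sum_pairs_snoc pairs_right exp_add)
  qed
  have "(\<Sum>R\<in>Pow (set (t @ [y])). F (t @ [y]) R)
      = (\<Sum>R\<in>Pow (set t). - (F t R * exp (- W))) + (\<Sum>R\<in>Pow (set t). F t R * exp W)"
    using y by (simp add: sum_Pow_insert y_left y_right)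
  also have "\<dots> = (\<Sum>R\<in>Pow (set t). F t R) * zeta (2 * W)"
    by (simp add: zeta_def sum_negf sum_distrib_right[symmetric] right_diff_distrib)
  also have "\<dots> = zeta_prefix \<omega> c (t @ [y])"
    by (simp only: snoc.IH[OF y(2)] zeta_prefix_snoc F_def W_def)
  finally show ?case
    unfolding F_def by (rule sym)
qed

section \<open>Regrouping arrangements by shuffles\<close>

definition left_of :: "'a \<Rightarrow> 'a list \<Rightarrow> 'a list" where
  "left_of c s = rev (takeWhile (\<lambda>z. z \<noteq> c) s)"

definition right_of :: "'a \<Rightarrow> 'a list \<Rightarrow> 'a list" where
  "right_of c s = tl (dropWhile (\<lambda>z. z \<noteq> c) s)"

lemma left_of_right_of_rev_append:
  assumes "c \<notin> set L"
  shows "left_of c (rev L @ c # R) = L" "right_of c (rev L @ c # R) = R"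
proof -
  have "\<And>z. z \<in> set (rev L) \<Longrightarrow> z \<noteq> c"
    using assms by auto
  from takeWhile_append2[of "rev L" _ "c # R", OF this] dropWhile_append2[of "rev L" _ "c # R", OF this]
  show "left_of c (rev L @ c # R) = L" "right_of c (rev L @ c # R) = R"
    by (simp_all add: left_of_def right_of_def)
qed

lemma rev_left_of_append_right_of:
  assumes "c \<in> set s"
  shows "rev (left_of c s) @ c # right_of c s = s"
proof -
  have "dropWhile (\<lambda>z. z \<noteq> c) s = c # right_of c s"
    using assms by (induction s) (auto simp: right_of_def)
  then show ?thesis
    using takeWhile_dropWhile_id[of "\<lambda>z. z \<noteq> c" s] by (simp add: left_of_def)
qed

lemma left_of_right_of_arrange:
  assumes "c \<notin> set t"
  shows "left_of c (arrange c R t) = filter (\<lambda>z. z \<notin> R) t"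
    "right_of c (arrange c R t) = filter (\<lambda>z. z \<in> R) t"
  using assms by (simp_all add: arrange_def left_of_right_of_rev_append)

lemma left_of_right_of_permutations_of_set:
  assumes "s \<in> permutations_of_set (insert c S)" "c \<notin> S"
  shows "distinct (c # left_of c s @ right_of c s)" "set (left_of c s @ right_of c s) = S"
proof -
  have "distinct s" "set s = insert c S"
    using assms(1) by (simp_all add: permutations_of_set_def)
  moreover have "rev (left_of c s) @ c # right_of c s = s"
    using \<open>set s = insert c S\<close> by (intro rev_left_of_append_right_of) simp
  ultimately have "distinct (rev (left_of c s) @ c # right_of c s)"
    "set (rev (left_of c s) @ c # right_of c s) = insert c S"
    by simp_all
  then show "distinct (c # left_of c s @ right_of c s)" "set (left_of c s @ right_of c s) = S"
    using assms(2) by auto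
qed

lemma arrange_in_permutations_of_set:
  assumes "t \<in> permutations_of_set S" "c \<notin> S"
  shows "arrange c R t \<in> permutations_of_set (insert c S)"
proof
  have "distinct (c # t)" "set (c # t) = insert c S"
    using assms by (auto simp: permutations_of_set_def)
  moreover have "mset (arrange c R t) = mset (c # t)"
    by (rule mset_arrange)
  ultimately show "distinct (arrange c R t)" "set (arrange c R t) = insert c S"
    using mset_eq_imp_distinct_iff mset_eq_setD by metis+
qed

lemma shuffles_left_of_right_of_permutations_of_set:
  assumes "s \<in> permutations_of_set (insert c S)" "c \<notin> S"
    and "t \<in> shuffles (left_of c s) (right_of c s)"
  shows "t \<in> permutations_of_set S"
proof
  note split = left_of_right_of_permutations_of_set[OF assms(1,2)]
  show "set t = S"
    using split assms(3) by (simp add: set_shuffles)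
  show "distinct t"
    using split by (intro distinct_disjoint_shuffles[OF _ _ _ assms(3)]) auto
qed

lemma set_right_of_arrange:
  assumes "c \<notin> set t" "R \<subseteq> set t"
  shows "set (right_of c (arrange c R t)) = R"
  using assms by (auto simp: left_of_right_of_arrange)

lemma in_shuffles_left_of_right_of_arrange:
  assumes "c \<notin> set t"
  shows "t \<in> shuffles (left_of c (arrange c R t)) (right_of c (arrange c R t))"
  using assms partition_in_shuffles[where P = "\<lambda>z. z \<notin> R" and xs = t]
  by (simp add: left_of_right_of_arrange)

lemma arrange_set_right_of:
  assumes "s \<in> permutations_of_set (insert c S)" "c \<notin> S"
    and "t \<in> shuffles (left_of c s) (right_of c s)"
  shows "arrange c (set (right_of c s)) t = s"
proof -
  note split = left_of_right_of_permutations_of_set[OF assms(1,2)]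
  have "set (left_of c s) \<inter> set (right_of c s) = {}"
    using split by auto
  from filter_shuffles_disjoint2[OF this assms(3)]
  have "filter (\<lambda>z. z \<notin> set (right_of c s)) t = left_of c s"
       "filter (\<lambda>z. z \<in> set (right_of c s)) t = right_of c s"
    by simp_all
  moreover have "c \<in> set s"
    using assms(1) by (simp add: permutations_of_set_def)
  ultimately show ?thesis
    by (simp add: arrange_def rev_left_of_append_right_of)
qed

lemma bij_betw_arrange:
  assumes "c \<notin> S"
  shows "bij_betw (\<lambda>(t, R). (arrange c R t, t)) (permutations_of_set S \<times> Pow S)
    (SIGMA s:permutations_of_set (insert c S). shuffles (left_of c s) (right_of c s))"
proof (rule bij_betwI[where g = "\<lambda>(s, t). (t, set (right_of c s))"])
  show "(\<lambda>(t, R). (arrange c R t, t)) \<in> permutations_of_set S \<times> Pow S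
    \<rightarrow> (SIGMA s:permutations_of_set (insert c S). shuffles (left_of c s) (right_of c s))"
    using assms by (auto intro!: arrange_in_permutations_of_set in_shuffles_left_of_right_of_arrange
      dest: permutations_of_setD)
  show "(\<lambda>(s, t). (t, set (right_of c s))) \<in> (SIGMA s:permutations_of_set (insert c S). shuffles (left_of c s) (right_of c s))
    \<rightarrow> permutations_of_set S \<times> Pow S"
    using shuffles_left_of_right_of_permutations_of_set[OF _ assms] left_of_right_of_permutations_of_set(2)[OF _ assms]
    by fastforce
  show "(\<lambda>(s, t). (t, set (right_of c s))) ((\<lambda>(t, R). (arrange c R t, t)) tR) = tR"
    if "tR \<in> permutations_of_set S \<times> Pow S" for tR
    using that assms by (auto simp: set_right_of_arrange permutations_of_set_def)
  show "(\<lambda>(t, R). (arrange c R t, t)) ((\<lambda>(s, t). (t, set (right_of c s))) st) = st"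
    if "st \<in> (SIGMA s:permutations_of_set (insert c S). shuffles (left_of c s) (right_of c s))" for st
    using that assms by (auto simp: arrange_set_right_of)
qed

lemma sum_shuffles_left_of_right_of:
  assumes "s \<in> permutations_of_set (insert c S)" "c \<notin> S" "inj_on \<beta> (insert c S)"
  shows "(\<Sum>t\<in>shuffles (left_of c s) (right_of c s). (-1) ^ length (left_of c s) * chain_weight \<beta> (c # t))
    = chain_weight \<beta> s"
proof -
  note split = left_of_right_of_permutations_of_set[OF assms(1,2)]
  have "inj_on \<beta> (set (c # left_of c s @ right_of c s))"
    using split(2) assms(3) by simp
  with split(1) have "(\<Sum>t\<in>shuffles (left_of c s) (right_of c s). chain_weight \<beta> (c # t))
      = chain_weight \<beta> (c # left_of c s) * chain_weight \<beta> (c # right_of c s)"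
    by (rule sum_shuffles_chain_weight)
  then have "(\<Sum>t\<in>shuffles (left_of c s) (right_of c s). (-1) ^ length (left_of c s) * chain_weight \<beta> (c # t))
      = chain_weight \<beta> (rev (left_of c s) @ c # right_of c s)"
    by (simp add: sum_distrib_left[symmetric] chain_weight_rev_append mult.assoc)
  also have "rev (left_of c s) @ c # right_of c s = s"
    using assms(1) by (intro rev_left_of_append_right_of) (simp add: permutations_of_set_def)
  finally show ?thesis .
qed

lemma sum_zeta_prefix_chain_weight:
  fixes \<beta> :: "'a \<Rightarrow> complex"
  assumes "finite S" "c \<notin> S" "inj_on \<beta> (insert c S)" "\<And>p q. \<omega> q p = - \<omega> p q"
  shows "(\<Sum>t\<in>permutations_of_set S. zeta_prefix \<omega> c t * chain_weight \<beta> (c # t))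
    = (\<Sum>s\<in>permutations_of_set (insert c S). exp (sum_pairs \<omega> s) * chain_weight \<beta> s)"
proof -
  define G where "G s t = (-1) ^ length (left_of c s) * exp (sum_pairs \<omega> s) * chain_weight \<beta> (c # t)" for s t
  have "(\<Sum>t\<in>permutations_of_set S. zeta_prefix \<omega> c t * chain_weight \<beta> (c # t))
      = (\<Sum>t\<in>permutations_of_set S. \<Sum>R\<in>Pow S. G (arrange c R t) t)"
  proof (rule sum.cong[OF refl])
    fix t assume t: "t \<in> permutations_of_set S"
    then have "distinct t" "set t = S" "c \<notin> set t"
      using assms(2) by (auto simp: permutations_of_set_def)
    then show "zeta_prefix \<omega> c t * chain_weight \<beta> (c # t) = (\<Sum>R\<in>Pow S. G (arrange c R t) t)"
      using zeta_prefix_expansion[where \<omega> = \<omega> and c = c, OF assms(4) \<open>distinct t\<close>]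
      by (simp add: G_def left_of_right_of_arrange sum_distrib_right)
  qed
  also have "\<dots> = (\<Sum>(t, R)\<in>permutations_of_set S \<times> Pow S. G (arrange c R t) t)"
    by (rule sum.cartesian_product)
  also have "\<dots> = (\<Sum>(s, t)\<in>(SIGMA s:permutations_of_set (insert c S). shuffles (left_of c s) (right_of c s)). G s t)"
    using sum.reindex_bij_betw[OF bij_betw_arrange[OF assms(2)], of "\<lambda>(s, t). G s t"]
    by (simp add: case_prod_unfold)
  also have "\<dots> = (\<Sum>s\<in>permutations_of_set (insert c S). \<Sum>t\<in>shuffles (left_of c s) (right_of c s). G s t)"
    by (rule sum.Sigma[symmetric]) simp_all
  also have "\<dots> = (\<Sum>s\<in>permutations_of_set (insert c S). exp (sum_pairs \<omega> s) * chain_weight \<beta> s)"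
  proof (rule sum.cong[OF refl])
    fix s assume "s \<in> permutations_of_set (insert c S)"
    from sum_shuffles_left_of_right_of[OF this assms(2,3)]
    show "(\<Sum>t\<in>shuffles (left_of c s) (right_of c s). G s t) = exp (sum_pairs \<omega> s) * chain_weight \<beta> s"
      by (simp add: G_def sum_distrib_left[symmetric] mult.commute mult.left_commute)
  qed
  finally show ?thesis .
qed

section \<open>From index permutations to lists\<close>

lemma permutes_nth_permutations_of_set_upt:
  assumes "t \<in> permutations_of_set {m..<N}"
  shows "(\<lambda>k. if k \<in> {m..<N} then t ! (k - m) else k) permutes {m..<N}" (is "?\<sigma> permutes _")
proof (rule bij_imp_permutes)
  have len: "length t = N - m" and "distinct t" "set t = {m..<N}"
    using assms length_finite_permutations_of_set[OF assms] by (auto simp: permutations_of_set_def)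
  have "t ! (k - m) \<in> {m..<N}" if "k \<in> {m..<N}" for k
  proof -
    have "k - m < length t"
      using that len by auto
    from nth_mem[OF this] show ?thesis
      using \<open>set t = {m..<N}\<close> by simp
  qed
  then have "?\<sigma> ` {m..<N} \<subseteq> {m..<N}"
    by auto
  moreover have "inj_on ?\<sigma> {m..<N}"
    using \<open>distinct t\<close> len by (auto simp: inj_on_def nth_eq_iff_index_eq)
  ultimately show "bij_betw ?\<sigma> {m..<N} {m..<N}"
    using endo_inj_surj[of "{m..<N}" ?\<sigma>] unfolding bij_betw_def by blast
qed auto

lemma bij_betw_map_permutes_upt:
  "bij_betw (\<lambda>\<sigma>. map \<sigma> [m..<N]) {\<sigma>. \<sigma> permutes {m..<N}} (permutations_of_set {m..<N})"
proof (rule bij_betwI[where g = "\<lambda>t k. if k \<in> {m..<N} then t ! (k - m) else k"])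
  show "(\<lambda>\<sigma>. map \<sigma> [m..<N]) \<in> {\<sigma>. \<sigma> permutes {m..<N}} \<rightarrow> permutations_of_set {m..<N}"
    by (auto simp: permutations_of_set_def permutes_image permutes_inj_on distinct_map)
  show "(\<lambda>t k. if k \<in> {m..<N} then t ! (k - m) else k) \<in> permutations_of_set {m..<N} \<rightarrow> {\<sigma>. \<sigma> permutes {m..<N}}"
    by (rule Pi_I, rule CollectI, rule permutes_nth_permutations_of_set_upt)
  show "(\<lambda>k. if k \<in> {m..<N} then map \<sigma> [m..<N] ! (k - m) else k) = \<sigma>"
    if "\<sigma> \<in> {\<sigma>. \<sigma> permutes {m..<N}}" for \<sigma>
    using that by (auto simp: fun_eq_iff permutes_not_in)
  show "map (\<lambda>k. if k \<in> {m..<N} then t ! (k - m) else k) [m..<N] = t"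
    if "t \<in> permutations_of_set {m..<N}" for t
    using length_finite_permutations_of_set[OF that] by (intro nth_equalityI) auto
qed

lemma sum_pairs_map_upt:
  "sum_pairs \<omega> (map f [m..<N]) = (\<Sum>i\<in>{m..<N}. \<Sum>j\<in>{Suc i..<N}. \<omega> (f i) (f j))"
proof (induction "N - m" arbitrary: m)
  case (Suc d)
  then have "m < N" by simp
  then show ?case
    using Suc by (simp add: upt_conv_Cons sum.atLeast_Suc_lessThan interv_sum_list_conv_sum_set_nat o_def)
qed simp

lemma chain_weight_map_upt:
  "m \<le> n \<Longrightarrow> chain_weight \<beta> (map f [m..<Suc n]) = 1 / (\<Prod>j\<in>{m..<n}. \<beta> (f j) - \<beta> (f (Suc j)))"
proof (induction "n - m" arbitrary: m)
  case (Suc d)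
  then have "m < n" by simp
  then have "map f [m..<Suc n] = f m # f (Suc m) # map f [Suc (Suc m)..<Suc n]"
    by (simp add: upt_conv_Cons del: upt_Suc)
  moreover have "map f [Suc m..<Suc n] = f (Suc m) # map f [Suc (Suc m)..<Suc n]"
    using \<open>m < n\<close> by (simp add: upt_conv_Cons del: upt_Suc)
  ultimately show ?case
    using Suc(1)[of "Suc m"] Suc(2) \<open>m < n\<close> by (simp add: prod.atLeast_Suc_lessThan del: upt_Suc)
qed simp

lemma zeta_prefix_map_upt:
  "zeta_prefix \<omega> (f 1) (map f [2..<Suc n]) = (\<Prod>j\<in>{1..<n}. zeta (2 * (\<Sum>k\<in>{1..j}. \<omega> (f k) (f (Suc j)))))"
proof (induction n)
  case (Suc n)
  show ?case
  proof (cases "n = 0")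
    case False
    have "f 1 # map f [2..<Suc n] = map f [1..<Suc n]"
      using False by (simp add: upt_conv_Cons numeral_2_eq_2 del: upt_Suc)
    moreover have "map f [2..<Suc (Suc n)] = map f [2..<Suc n] @ [f (Suc n)]"
      using False by simp
    moreover have "sum_list (map (\<lambda>k. \<omega> k (f (Suc n))) (map f [1..<Suc n])) = (\<Sum>k\<in>{1..n}. \<omega> (f k) (f (Suc n)))"
      by (simp add: interv_sum_list_conv_sum_set_nat o_def atLeastLessThanSuc_atLeastAtMost del: upt_Suc)
    ultimately show ?thesis
      using Suc.IH False by (simp add: zeta_prefix_snoc prod.atLeastLessThan_Suc del: upt_Suc)
  qed simp
qed simp

lemma prod_consecutive_pairs:
  fixes g :: "nat \<Rightarrow> 'a::comm_monoid_mult"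
  assumes "2 \<le> n"
  shows "(\<Prod>j\<in>{1..<n}. g j * g (Suc j)) = (\<Prod>j\<in>{1..n}. g j) * (\<Prod>j\<in>{2..<n}. g j)"
proof -
  have "(\<Prod>j\<in>{1..<n}. g (Suc j)) = (\<Prod>j\<in>{2..<Suc n}. g j)"
    using prod.shift_bounds_Suc_ivl[of g 1 n] by (simp add: numeral_2_eq_2)
  moreover have "{1..n} = insert 1 {2..<Suc n}" "{1..<n} = insert 1 {2..<n}"
    using assms by auto
  ultimately show ?thesis
    using assms by (simp add: prod.distrib prod.atLeastLessThan_Suc ac_simps)
qed

lemma Collect_permutes_insert_fixed:
  assumes "c \<notin> S"
  shows "{\<tau>. \<tau> permutes insert c S \<and> \<tau> c = c} = {\<tau>. \<tau> permutes S}"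
proof (intro set_eqI iffI; clarify)
  fix \<tau> assume "\<tau> permutes insert c S" "\<tau> c = c"
  with permutes_insert_lemma[of \<tau> c S] show "\<tau> permutes S"
    by simp
next
  fix \<tau> assume "\<tau> permutes S"
  then show "\<tau> permutes insert c S \<and> \<tau> c = c"
    using assms by (auto intro: permutes_subset permutes_not_in)
qed

lemma w_swap: "w a x q p = - w a x p q"
  by (simp add: w_def field_simps)

lemma cross_diff_eq_mult_u:
  assumes "x p \<noteq> 0" "x q \<noteq> 0"
  shows "a p * x q - a q * x p = x p * x q * u a x p q"
  using assms by (simp add: u_def field_simps)

lemma inj_on_ratio:
  fixes a x :: "'a \<Rightarrow> 'b::field"
  assumes "\<And>i. i \<in> A \<Longrightarrow> x i \<noteq> 0"
    and "\<And>i j. i \<in> A \<Longrightarrow> j \<in> A \<Longrightarrow> i \<noteq> j \<Longrightarrow> a i * x j \<noteq> a j * x i"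
  shows "inj_on (\<lambda>i. a i / x i) A"
proof (rule inj_onI)
  fix i j assume "i \<in> A" "j \<in> A" "a i / x i = a j / x j"
  moreover have "x i \<noteq> 0" "x j \<noteq> 0"
    using assms(1) \<open>i \<in> A\<close> \<open>j \<in> A\<close> by simp_all
  ultimately have "a i * x j = a j * x i"
    by (simp add: frac_eq_eq)
  then show "i = j"
    using assms(2) \<open>i \<in> A\<close> \<open>j \<in> A\<close> by blast
qed

lemma two_sum_w:
  "2 * (\<Sum>k\<in>K. w a x (f k) y) = (\<Sum>k\<in>K. a (f k)) * x y - a y * (\<Sum>k\<in>K. x (f k))"
proof -
  have "2 * (\<Sum>k\<in>K. w a x (f k) y) = (\<Sum>k\<in>K. a (f k) * x y - a y * x (f k))"
    unfolding w_def sum_divide_distrib[symmetric] by simp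
  then show ?thesis
    by (simp add: sum_subtractf sum_distrib_left sum_distrib_right)
qed

lemma prod_cross_diff_permutes:
  fixes a x :: "nat \<Rightarrow> complex"
  assumes "2 \<le> n" "\<tau> permutes {1..n}" "\<And>i. i \<in> {1..n} \<Longrightarrow> x i \<noteq> 0"
  shows "(\<Prod>j\<in>{1..<n}. a (\<tau> j) * x (\<tau> (Suc j)) - a (\<tau> (Suc j)) * x (\<tau> j))
    = (\<Prod>i=1..n. x i) * (\<Prod>j\<in>{2..<n}. x (\<tau> j)) * (\<Prod>j\<in>{1..<n}. u a x (\<tau> j) (\<tau> (Suc j)))"
proof -
  have x_nonzero: "x (\<tau> j) \<noteq> 0" if "j \<in> {1..n}" for j
    using assms(3) permutes_in_image[OF assms(2)] that by simp
  have "(\<Prod>j\<in>{1..<n}. a (\<tau> j) * x (\<tau> (Suc j)) - a (\<tau> (Suc j)) * x (\<tau> j))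
      = (\<Prod>j\<in>{1..<n}. x (\<tau> j) * x (\<tau> (Suc j))) * (\<Prod>j\<in>{1..<n}. u a x (\<tau> j) (\<tau> (Suc j)))"
    unfolding prod.distrib[symmetric] by (intro prod.cong refl) (simp add: cross_diff_eq_mult_u x_nonzero)
  also have "(\<Prod>j\<in>{1..<n}. x (\<tau> j) * x (\<tau> (Suc j))) = (\<Prod>j=1..n. x (\<tau> j)) * (\<Prod>j\<in>{2..<n}. x (\<tau> j))"
    by (rule prod_consecutive_pairs[OF assms(1)])
  also have "(\<Prod>j=1..n. x (\<tau> j)) = (\<Prod>i=1..n. x i)"
    using prod.permute[OF assms(2), of x] by (simp add: comp_def)
  finally show ?thesis .
qed

lemma P_summand_eq:
  fixes a x :: "nat \<Rightarrow> complex"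
  assumes "2 \<le> n" "\<tau> permutes {2..<Suc n}" "\<And>i. i \<in> {1..n} \<Longrightarrow> x i \<noteq> 0"
  shows "(\<Prod>j=2..n-1. x (\<tau> j)) *
      (\<Prod>j=1..n-1. zeta ((\<Sum>k=1..j. a (\<tau> k)) * x (\<tau> (j+1)) - a (\<tau> (j+1)) * (\<Sum>k=1..j. x (\<tau> k))))
      / (\<Prod>j=1..n-1. a (\<tau> j) * x (\<tau> (j+1)) - a (\<tau> (j+1)) * x (\<tau> j))
    = 1 / (\<Prod>i=1..n. x i) *
      (zeta_prefix (w a x) 1 (map \<tau> [2..<Suc n]) * chain_weight (\<lambda>i. a i / x i) (1 # map \<tau> [2..<Suc n]))"
proof -
  define U where "U = (\<Prod>j\<in>{1..<n}. u a x (\<tau> j) (\<tau> (Suc j)))"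
  define M where "M = (\<Prod>j\<in>{2..<n}. x (\<tau> j))"
  have "\<tau> 1 = 1"
    using assms(2) by (simp add: permutes_not_in)
  have perm: "\<tau> permutes {1..n}"
    using assms(2) by (rule permutes_subset) auto
  have intervals: "{1..n-1} = {1..<n}" "{2..n-1} = {2..<n}"
    using assms(1) by auto
  have "zeta_prefix (w a x) 1 (map \<tau> [2..<Suc n])
      = (\<Prod>j\<in>{1..<n}. zeta ((\<Sum>k=1..j. a (\<tau> k)) * x (\<tau> (j+1)) - a (\<tau> (j+1)) * (\<Sum>k=1..j. x (\<tau> k))))"
    using zeta_prefix_map_upt[of "w a x" \<tau> n] \<open>\<tau> 1 = 1\<close> by (simp add: two_sum_w)
  moreover have "chain_weight (\<lambda>i. a i / x i) (1 # map \<tau> [2..<Suc n]) = 1 / U"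
  proof -
    have "1 # map \<tau> [2..<Suc n] = map \<tau> [1..<Suc n]"
      using assms(1) \<open>\<tau> 1 = 1\<close> by (simp add: upt_conv_Cons numeral_2_eq_2 del: upt_Suc)
    then show ?thesis
      using chain_weight_map_upt[of 1 n "\<lambda>i. a i / x i" \<tau>] assms(1) by (simp add: U_def u_def del: upt_Suc)
  qed
  moreover have "(\<Prod>j\<in>{1..<n}. a (\<tau> j) * x (\<tau> (j+1)) - a (\<tau> (j+1)) * x (\<tau> j)) = (\<Prod>i=1..n. x i) * M * U"
    using prod_cross_diff_permutes[where a = a and x = x, OF assms(1) perm assms(3)] by (simp add: M_def U_def)
  moreover have "M \<noteq> 0"
    using assms(3) permutes_in_image[OF perm] by (simp add: M_def)
  ultimately show ?thesis
    unfolding intervals M_def[symmetric] by (simp add: field_simps)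
qed

lemma P_eq_sum_zeta_prefix:
  fixes a x :: "nat \<Rightarrow> complex"
  assumes "1 \<le> n" "\<And>i. i \<in> {1..n} \<Longrightarrow> x i \<noteq> 0"
  shows "P n a x = 1 / (\<Prod>i=1..n. x i) *
    (\<Sum>t\<in>permutations_of_set {2..<Suc n}. zeta_prefix (w a x) 1 t * chain_weight (\<lambda>i. a i / x i) (1 # t))"
proof (cases "n = 1")
  case False
  then have "2 \<le> n"
    using assms(1) by simp
  have "insert 1 {2..<Suc n} = {1..n}"
    using assms(1) by auto
  then have "{\<tau>. \<tau> permutes {1..n} \<and> \<tau> 1 = 1} = {\<tau>. \<tau> permutes {2..<Suc n}}"
    using Collect_permutes_insert_fixed[of 1 "{2..<Suc n}"] by simp
  then have "P n a x = (\<Sum>\<tau>\<in>{\<tau>. \<tau> permutes {2..<Suc n}}. 1 / (\<Prod>i=1..n. x i) *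
      (zeta_prefix (w a x) 1 (map \<tau> [2..<Suc n]) * chain_weight (\<lambda>i. a i / x i) (1 # map \<tau> [2..<Suc n])))"
    unfolding P_def if_not_P[OF False] by (intro sum.cong refl P_summand_eq \<open>2 \<le> n\<close> assms(2)) auto
  also have "\<dots> = (\<Sum>t\<in>permutations_of_set {2..<Suc n}. 1 / (\<Prod>i=1..n. x i) *
      (zeta_prefix (w a x) 1 t * chain_weight (\<lambda>i. a i / x i) (1 # t)))"
    by (rule sum.reindex_bij_betw[OF bij_betw_map_permutes_upt])
  finally show ?thesis
    by (simp add: sum_distrib_left)
qed (simp add: P_def)

lemma sum_permutes_exp_div_eq:
  fixes a x :: "nat \<Rightarrow> complex"
  assumes "1 \<le> n"
  shows "(\<Sum>\<sigma>\<in>{\<sigma>. \<sigma> permutes {1..n}}.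
      exp (\<Sum>i=1..n. \<Sum>j=i+1..n. w a x (\<sigma> i) (\<sigma> j)) / (\<Prod>j=1..n-1. u a x (\<sigma> j) (\<sigma> (j+1))))
    = (\<Sum>s\<in>permutations_of_set {1..<Suc n}. exp (sum_pairs (w a x) s) * chain_weight (\<lambda>i. a i / x i) s)"
proof -
  have intervals: "{1..n} = {1..<Suc n}" "{1..n-1} = {1..<n}" "\<And>i. {i+1..n} = {Suc i..<Suc n}"
    using assms by auto
  have "(\<Sum>\<sigma>\<in>{\<sigma>. \<sigma> permutes {1..n}}.
      exp (\<Sum>i=1..n. \<Sum>j=i+1..n. w a x (\<sigma> i) (\<sigma> j)) / (\<Prod>j=1..n-1. u a x (\<sigma> j) (\<sigma> (j+1))))
    = (\<Sum>\<sigma>\<in>{\<sigma>. \<sigma> permutes {1..<Suc n}}.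
      exp (sum_pairs (w a x) (map \<sigma> [1..<Suc n])) * chain_weight (\<lambda>i. a i / x i) (map \<sigma> [1..<Suc n]))"
    unfolding intervals using assms
    by (simp add: sum_pairs_map_upt chain_weight_map_upt u_def del: upt_Suc)
  also have "\<dots> = (\<Sum>s\<in>permutations_of_set {1..<Suc n}. exp (sum_pairs (w a x) s) * chain_weight (\<lambda>i. a i / x i) s)"
    by (rule sum.reindex_bij_betw[OF bij_betw_map_permutes_upt])
  finally show ?thesis .
qed

theorem proposition3p1:
  fixes n :: nat and a x :: "nat \<Rightarrow> complex"
  assumes "n \<ge> 1"
    and "\<And>i. i \<in> {1..n} \<Longrightarrow> x i \<noteq> 0"
    and "\<And>i j. i \<in> {1..n} \<Longrightarrow> j \<in> {1..n} \<Longrightarrow> i \<noteq> j \<Longrightarrow> a i * x j \<noteq> a j * x i"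
  shows "P n a x =
    (1 / (\<Prod>i=1..n. x i)) *
    (\<Sum>\<sigma>\<in>{\<sigma>. \<sigma> permutes {1..n}}.
        exp (\<Sum>i=1..n. \<Sum>j=i+1..n. w a x (\<sigma> i) (\<sigma> j))
        / (\<Prod>j=1..n-1. u a x (\<sigma> j) (\<sigma> (j+1))))"
proof -
  have indices: "insert 1 {2..<Suc n} = {1..<Suc n}" "{1..<Suc n} = {1..n}"
    using assms(1) by auto
  have inj: "inj_on (\<lambda>i. a i / x i) (insert 1 {2..<Suc n})"
    unfolding indices using assms(2,3) by (rule inj_on_ratio)
  have "P n a x = 1 / (\<Prod>i=1..n. x i) *
      (\<Sum>t\<in>permutations_of_set {2..<Suc n}. zeta_prefix (w a x) 1 t * chain_weight (\<lambda>i. a i / x i) (1 # t))"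
    by (rule P_eq_sum_zeta_prefix[OF assms(1,2)])
  also have "\<dots> = 1 / (\<Prod>i=1..n. x i) *
      (\<Sum>s\<in>permutations_of_set (insert 1 {2..<Suc n}). exp (sum_pairs (w a x) s) * chain_weight (\<lambda>i. a i / x i) s)"
    by (subst sum_zeta_prefix_chain_weight[OF _ _ inj w_swap]) simp_all
  also have "\<dots> = 1 / (\<Prod>i=1..n. x i) *
      (\<Sum>\<sigma>\<in>{\<sigma>. \<sigma> permutes {1..n}}.
        exp (\<Sum>i=1..n. \<Sum>j=i+1..n. w a x (\<sigma> i) (\<sigma> j)) / (\<Prod>j=1..n-1. u a x (\<sigma> j) (\<sigma> (j+1))))"
    unfolding indices(1) sum_permutes_exp_div_eq[OF assms(1)] ..
  finally show ?thesis .
qed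

end
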